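(* Let $A\in gl(n,\mathbb{C})$ be nilpotent of index $m\ge2$ (i.e. $A^m=0\ne A^{m-1}$), let $L:\mathbb{C}^n\to\mathbb{C}^n$ be the linear map it represents, $K_j=\ker L^j$ for $j=0,\dots,m$, $K_{-1}=\{0\}$, $U_j=K_j\cap K_{j-1}^{\perp}$ and $r_j=\dim U_j$ for $j=1,\dots,m$. Then for every $j\in\{1,\dots,m\}$ there exists an orthonormal basis $\{u^j_1,\dots,u^j_{r_j}\}$ of $U_j$ such that for all $j\ge2$ and all $k\in\{1,\dots,r_j\}$, $$Lu^j_k\in\mathrm{Span}(u^{j-1}_1,\dots,u^{j-1}_k)\oplus^\perp K_{j-2}\quad\text{and}\quad\langle Lu^j_k,u^{j-1}_k\rangle\ne0.$$
   Context: $\mathbb{C}^n$ carries the standard Hermitian inner product $\langle\cdot,\cdot\rangle$; $\perp$ denotes orthogonal complement and $\oplus^\perp$ an orthogonal direct sum. *)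

theory Defs
  imports "HOL-Analysis.Analysis"
begin

primrec matpow :: "'a::comm_ring_1 ^'n ^'n \<Rightarrow> nat \<Rightarrow> 'a ^'n ^'n" where
  "matpow A 0 = mat 1"
| "matpow A (Suc k) = A ** matpow A k"

definition cinner :: "complex ^'n \<Rightarrow> complex ^'n \<Rightarrow> complex" where
  "cinner x y = (\<Sum>i\<in>UNIV. x $ i * cnj (y $ i))"

definition corth :: "(complex ^'n) set \<Rightarrow> (complex ^'n) set" where
  "corth S = {x. \<forall>y\<in>S. cinner x y = 0}"

definition kerpow :: "complex ^'n ^'n \<Rightarrow> nat \<Rightarrow> (complex ^'n) set" where
  "kerpow A j = {x. matpow A j *v x = 0}"

definition Uspace :: "complex ^'n ^'n \<Rightarrow> nat \<Rightarrow> (complex ^'n) set" where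
  "Uspace A j = kerpow A j \<inter> corth (kerpow A (j - 1))"

definition orth_sum :: "(complex ^'n) set \<Rightarrow> (complex ^'n) set \<Rightarrow> (complex ^'n) set" where
  "orth_sum S T = {a + b | a b. a \<in> S \<and> b \<in> T}"

end

theory Submission
  imports Defs
begin

text \<open>Descending induction on j. Given an orthonormal basis of U_j, let P be the
orthogonal projection onto K_{j-2} and T = (I - P) L. Then T maps U_j into U_{j-1}, and
injectively: if L x lies in K_{j-2} then x lies in K_{j-1}, which is orthogonal to U_j.
Gram-Schmidt turns the images under T of the basis of U_j into orthonormal vectors of
U_{j-1} with the same initial spans, the k-th of which is not orthogonal to the k-th image;
extend them to an orthonormal basis of U_{j-1}. Since L u = T u + P L u and U_{j-1} is
orthogonal to K_{j-2}, both claims follow.\<close>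

section \<open>The Hermitian inner product\<close>

lemma cinner_add_left: "cinner (x + y) z = cinner x z + cinner y z"
  by (simp add: cinner_def distrib_right sum.distrib)

lemma cinner_diff_left: "cinner (x - y) z = cinner x z - cinner y z"
  by (simp add: cinner_def left_diff_distrib sum_subtractf)

lemma cinner_scale_left: "cinner (c *s x) z = c * cinner x z"
  by (simp add: cinner_def sum_distrib_left mult.assoc)

lemma cinner_scale_right: "cinner z (c *s x) = cnj c * cinner z x"
  by (simp add: cinner_def sum_distrib_left algebra_simps)

lemma cinner_zero_left [simp]: "cinner 0 z = 0"
  by (simp add: cinner_def)

lemma cinner_sum_left: "finite I \<Longrightarrow> cinner (\<Sum>i\<in>I. f i) z = (\<Sum>i\<in>I. cinner (f i) z)"
  by (induct I rule: finite_induct) (simp_all add: cinner_add_left)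

lemma cinner_commute: "cinner x y = cnj (cinner y x)"
  by (simp add: cinner_def mult.commute)

lemma cinner_eq_0_commute: "cinner x y = 0 \<longleftrightarrow> cinner y x = 0"
  by (metis cinner_commute complex_cnj_zero_iff)

lemma cinner_self_eq_norm: "cinner x x = complex_of_real ((norm x)\<^sup>2)"
proof -
  have "cinner x x = complex_of_real (\<Sum>i\<in>UNIV. (cmod (x $ i))\<^sup>2)"
    unfolding cinner_def of_real_sum
    by (rule sum.cong) (auto simp: complex_norm_square[symmetric] simp del: of_real_power)
  also have "(\<Sum>i\<in>UNIV. (cmod (x $ i))\<^sup>2) = (norm x)\<^sup>2"
    by (simp add: norm_vec_def L2_set_def sum_nonneg)
  finally show ?thesis .
qed

lemma cinner_self_eq_0: "cinner x x = 0 \<longleftrightarrow> x = 0"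
  by (simp add: cinner_self_eq_norm)

lemma cinner_span_left_eq_0:
  assumes "\<And>y. y \<in> X \<Longrightarrow> cinner y z = 0" and "y \<in> vec.span X"
  shows "cinner y z = 0"
proof -
  have "vec.subspace {y. cinner y z = 0}"
    unfolding vec.subspace_def by (simp add: cinner_add_left cinner_scale_left)
  then have "vec.span X \<subseteq> {y. cinner y z = 0}"
    using assms(1) by (intro vec.span_minimal) auto
  then show ?thesis
    using assms(2) by auto
qed

lemma corth_subspace: "vec.subspace (corth S)"
  unfolding vec.subspace_def corth_def by (simp add: cinner_add_left cinner_scale_left)

lemma corth_span: "corth (vec.span S) = corth S"
proof
  show "corth (vec.span S) \<subseteq> corth S"
    unfolding corth_def using vec.span_superset by blast
  show "corth S \<subseteq> corth (vec.span S)"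
    unfolding corth_def using cinner_span_left_eq_0 cinner_eq_0_commute by blast
qed

section \<open>Orthonormal families and Gram-Schmidt\<close>

definition orthonormal_upto :: "(nat \<Rightarrow> complex ^'n) \<Rightarrow> nat \<Rightarrow> bool" where
  "orthonormal_upto v r \<longleftrightarrow>
     (\<forall>k\<in>{1..r}. \<forall>l\<in>{1..r}. cinner (v k) (v l) = (if k = l then 1 else 0))"

lemma orthonormal_uptoD:
  "orthonormal_upto v r \<Longrightarrow> k \<in> {1..r} \<Longrightarrow> l \<in> {1..r} \<Longrightarrow>
    cinner (v k) (v l) = (if k = l then 1 else 0)"
  by (simp add: orthonormal_upto_def)

definition orthonormal_basis_of :: "(nat \<Rightarrow> complex ^'n) \<Rightarrow> (complex ^'n) set \<Rightarrow> bool" where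
  "orthonormal_basis_of v W \<longleftrightarrow>
     orthonormal_upto v (vec.dim W) \<and> vec.span (v ` {1..vec.dim W}) = W"

definition orth_proj :: "(nat \<Rightarrow> complex ^'n) \<Rightarrow> nat \<Rightarrow> complex ^'n \<Rightarrow> complex ^'n" where
  "orth_proj v r x = (\<Sum>i\<in>{1..r}. cinner x (v i) *s v i)"

lemma orth_proj_in_span: "orth_proj v r x \<in> vec.span (v ` {1..r})"
  unfolding orth_proj_def by (intro vec.span_sum vec.span_scale vec.span_base) auto

lemma cinner_orth_proj:
  assumes "orthonormal_upto v r" and "l \<in> {1..r}"
  shows "cinner (orth_proj v r x) (v l) = cinner x (v l)"
proof -
  have "cinner (orth_proj v r x) (v l) = (\<Sum>i\<in>{1..r}. cinner x (v i) * cinner (v i) (v l))"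
    unfolding orth_proj_def by (simp add: cinner_sum_left cinner_scale_left)
  also have "\<dots> = (\<Sum>i\<in>{1..r}. if i = l then cinner x (v i) else 0)"
    using orthonormal_uptoD[OF assms(1) _ assms(2)] by (intro sum.cong) auto
  finally show ?thesis
    using assms(2) by simp
qed

lemma linear_orth_proj: "Vector_Spaces.linear (*s) (*s) (orth_proj v r)"
  unfolding Vector_Spaces.linear_iff orth_proj_def using vec.vector_space_axioms
  by (simp add: cinner_add_left cinner_scale_left vec.scale_left_distrib sum.distrib
      vec.scale_sum_right vec.scale_scale)

lemma orthonormal_upto_inj_on:
  assumes "orthonormal_upto v r"
  shows "inj_on v {1..r}"
proof (rule inj_onI)
  fix k l assume k: "k \<in> {1..r}" and l: "l \<in> {1..r}" and "v k = v l"
  then have "cinner (v k) (v l) = 1"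
    using orthonormal_uptoD[OF assms k k] by simp
  moreover have "cinner (v k) (v l) = (if k = l then 1 else 0)"
    using orthonormal_uptoD[OF assms k l] .
  ultimately show "k = l"
    by (simp split: if_splits)
qed

lemma orthonormal_upto_notin_span:
  assumes "orthonormal_upto v r" and "k \<in> {1..r}"
  shows "v k \<notin> vec.span (v ` ({1..r} - {k}))"
proof
  assume in_span: "v k \<in> vec.span (v ` ({1..r} - {k}))"
  have "cinner y (v k) = 0" if "y \<in> v ` ({1..r} - {k})" for y
    using that orthonormal_uptoD[OF assms(1) _ assms(2)] by (auto split: if_splits)
  then have "cinner (v k) (v k) = 0"
    using in_span by (rule cinner_span_left_eq_0)
  then show False
    using orthonormal_uptoD[OF assms(1) assms(2) assms(2)] by simp
qed

lemma orthonormal_upto_independent: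
  assumes "orthonormal_upto v r"
  shows "vec.independent (v ` {1..r})"
proof -
  have "v ` {1..r} - {v k} = v ` ({1..r} - {k})" if "k \<in> {1..r}" for k
    using inj_on_image_set_diff[OF orthonormal_upto_inj_on[OF assms], of "{1..r}" "{k}"] that by simp
  then show ?thesis
    unfolding vec.dependent_def using orthonormal_upto_notin_span[OF assms] by force
qed

lemma orthonormal_upto_card: "orthonormal_upto v r \<Longrightarrow> card (v ` {1..r}) = r"
  by (drule orthonormal_upto_inj_on) (simp add: card_image)

lemma orthonormal_upto_le_dim:
  assumes "orthonormal_upto v r" and "v ` {1..r} \<subseteq> W"
  shows "r \<le> vec.dim W"
  using vec.independent_card_le_dim[OF assms(2) orthonormal_upto_independent[OF assms(1)]]
    orthonormal_upto_card[OF assms(1)]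
  by simp

lemma orthonormal_upto_Suc:
  assumes v: "orthonormal_upto v r" and ee: "cinner e e = 1"
    and e_orth: "\<And>l. l \<in> {1..r} \<Longrightarrow> cinner e (v l) = 0"
  shows "orthonormal_upto (v(Suc r := e)) (Suc r)"
  unfolding orthonormal_upto_def
proof (intro ballI)
  fix k l assume "k \<in> {1..Suc r}" "l \<in> {1..Suc r}"
  then consider "k = Suc r" "l = Suc r" | "k = Suc r" "l \<in> {1..r}" | "k \<in> {1..r}" "l = Suc r"
    | "k \<in> {1..r}" "l \<in> {1..r}"
    by fastforce
  then show "cinner ((v(Suc r := e)) k) ((v(Suc r := e)) l) = (if k = l then 1 else 0)"
  proof cases
    case 1
    then show ?thesis
      using ee by simp
  next
    case 2
    then show ?thesis
      using e_orth[of l] by simp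
  next
    case 3
    then show ?thesis
      using e_orth[of k] cinner_eq_0_commute[of e "v k"] by simp
  next
    case 4
    then show ?thesis
      using v by (simp add: orthonormal_upto_def)
  qed
qed

lemma gram_schmidt_step:
  assumes v: "orthonormal_upto v r" and x: "x \<notin> vec.span (v ` {1..r})"
  obtains e where "orthonormal_upto (v(Suc r := e)) (Suc r)"
    and "vec.span (insert e (v ` {1..r})) = vec.span (insert x (v ` {1..r}))"
    and "cinner x e \<noteq> 0"
proof -
  let ?V = "v ` {1..r}"
  define p where "p = orth_proj v r x"
  define y where "y = x - p"
  define e where "e = complex_of_real (1 / norm y) *s y"
  have p: "p \<in> vec.span ?V"
    unfolding p_def by (rule orth_proj_in_span)
  then have "y \<noteq> 0"
    using x unfolding y_def by auto
  then have ny: "norm y > 0"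
    by simp
  have e_orth: "cinner e (v l) = 0" if "l \<in> {1..r}" for l
    using cinner_orth_proj[OF v that]
    by (simp add: e_def y_def p_def cinner_scale_left cinner_diff_left)
  have ee: "cinner e e = 1"
    using ny by (simp add: e_def cinner_scale_left cinner_scale_right cinner_self_eq_norm[of y]
        power2_eq_square)
  have x_eq: "x = complex_of_real (norm y) *s e + p"
    using ny unfolding e_def by (simp add: vec.scale_scale y_def)
  have "cinner z e = 0" if "z \<in> ?V" for z
    using e_orth that cinner_eq_0_commute by blast
  then have "cinner p e = 0"
    using p by (rule cinner_span_left_eq_0)
  then have "cinner x e = complex_of_real (norm y)"
    by (subst x_eq) (simp add: cinner_add_left cinner_scale_left ee)
  then have x_e: "cinner x e \<noteq> 0"
    using ny by simp
  have span_eq: "vec.span (insert e ?V) = vec.span (insert x ?V)"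
  proof -
    have sup: "insert x ?V \<subseteq> vec.span (insert x ?V)" "insert e ?V \<subseteq> vec.span (insert e ?V)"
      by (rule vec.span_superset)+
    have "p \<in> vec.span (insert x ?V)" "p \<in> vec.span (insert e ?V)"
      using p vec.span_mono[of ?V] by auto
    have "e \<in> vec.span (insert x ?V)"
      unfolding e_def y_def using sup \<open>p \<in> vec.span (insert x ?V)\<close>
      by (intro vec.span_scale vec.span_diff) auto
    moreover have "x \<in> vec.span (insert e ?V)"
      using sup \<open>p \<in> vec.span (insert e ?V)\<close>
      by (subst x_eq) (intro vec.span_add vec.span_scale; auto)
    ultimately show ?thesis
      using sup unfolding vec.span_eq by auto
  qed
  moreover have "orthonormal_upto (v(Suc r := e)) (Suc r)"
    using v ee e_orth by (rule orthonormal_upto_Suc)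
  ultimately show ?thesis
    using x_e that by blast
qed

lemma image_fun_upd_Suc: "(v(Suc r := e)) ` {1..Suc r} = insert e (v ` {1..r})"
proof -
  have "{1..Suc r} = insert (Suc r) {1..r}"
    by auto
  moreover have "(v(Suc r := e)) ` {1..r} = v ` {1..r}"
    by (rule image_cong) auto
  ultimately show ?thesis
    by (simp only: image_insert fun_upd_same)
qed

lemma gram_schmidt:
  assumes "\<forall>k\<in>{1..r}. w k \<notin> vec.span (w ` {1..<k})"
  shows "\<exists>v. orthonormal_upto v r \<and> (\<forall>k\<le>r. vec.span (v ` {1..k}) = vec.span (w ` {1..k}))
           \<and> (\<forall>k\<in>{1..r}. cinner (w k) (v k) \<noteq> 0)"
  using assms
proof (induction r)
  case 0
  show ?case
    by (rule exI[of _ "\<lambda>_. 0"]) (auto simp: orthonormal_upto_def)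
next
  case (Suc r)
  then obtain v where v: "orthonormal_upto v r"
    and span_v: "\<forall>k\<le>r. vec.span (v ` {1..k}) = vec.span (w ` {1..k})"
    and w_v: "\<forall>k\<in>{1..r}. cinner (w k) (v k) \<noteq> 0"
    by auto
  have "w (Suc r) \<notin> vec.span (w ` {1..r})"
    using Suc.prems[rule_format, of "Suc r"] by (simp add: atLeastLessThanSuc_atLeastAtMost)
  then have "w (Suc r) \<notin> vec.span (v ` {1..r})"
    using span_v by simp
  then obtain e where v': "orthonormal_upto (v(Suc r := e)) (Suc r)"
    and span_e: "vec.span (insert e (v ` {1..r})) = vec.span (insert (w (Suc r)) (v ` {1..r}))"
    and w_e: "cinner (w (Suc r)) e \<noteq> 0"
    using gram_schmidt_step[OF v] by blast
  have "vec.span ((v(Suc r := e)) ` {1..k}) = vec.span (w ` {1..k})" if "k \<le> Suc r" for k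
  proof (cases "k = Suc r")
    case True
    have "vec.span (insert (w (Suc r)) (v ` {1..r})) = vec.span (insert (w (Suc r)) (w ` {1..r}))"
      using span_v by (simp add: vec.span_insert)
    then show ?thesis
      unfolding True image_fun_upd_Suc using span_e by (simp add: atLeastAtMostSuc_conv)
  next
    case False
    then have "(v(Suc r := e)) ` {1..k} = v ` {1..k}"
      using that by (intro image_cong) auto
    then show ?thesis
      using span_v that False by simp
  qed
  moreover have "cinner (w k) ((v(Suc r := e)) k) \<noteq> 0" if "k \<in> {1..Suc r}" for k
    using that w_v w_e by (cases "k = Suc r") auto
  ultimately show ?case
    using v' by blast
qed

lemma orthonormal_upto_extend:
  assumes "vec.subspace W" and "orthonormal_upto v r" and "v ` {1..r} \<subseteq> W"
  shows "\<exists>v'. (\<forall>i\<in>{1..r}. v' i = v i) \<and> orthonormal_basis_of v' W"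
  using assms
proof (induction "vec.dim W - r" arbitrary: v r)
  case 0
  then have "r = vec.dim W"
    using orthonormal_upto_le_dim[of v r W] by simp
  moreover have "vec.span (v ` {1..r}) = W"
  proof (rule vec.span_subspace)
    show "W \<subseteq> vec.span (v ` {1..r})"
      using vec.card_eq_dim[of "v ` {1..r}" W] orthonormal_upto_independent[OF "0.prems"(2)]
        orthonormal_upto_card[OF "0.prems"(2)] "0.prems"(3) \<open>r = vec.dim W\<close> by simp
  qed (use "0.prems" in auto)
  ultimately show ?case
    using "0.prems"(2) unfolding orthonormal_basis_of_def by auto
next
  case (Suc d)
  have "vec.span (v ` {1..r}) \<subseteq> W"
    using Suc.prems by (intro vec.span_minimal) auto
  moreover have "vec.span (v ` {1..r}) \<noteq> W"
  proof
    assume "vec.span (v ` {1..r}) = W"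
    then have "vec.dim W = r"
      using vec.indep_card_eq_dim_span[OF orthonormal_upto_independent[OF Suc.prems(2)]]
        orthonormal_upto_card[OF Suc.prems(2)] by simp
    with Suc.hyps(2) show False
      by simp
  qed
  ultimately obtain x where x: "x \<in> W" "x \<notin> vec.span (v ` {1..r})"
    by blast
  then obtain e where v': "orthonormal_upto (v(Suc r := e)) (Suc r)"
    and span_e: "vec.span (insert e (v ` {1..r})) = vec.span (insert x (v ` {1..r}))"
    using gram_schmidt_step[OF Suc.prems(2)] by blast
  have "vec.span (insert x (v ` {1..r})) \<subseteq> W"
    using Suc.prems x by (intro vec.span_minimal) auto
  then have "e \<in> W"
    using span_e vec.span_base[of e "insert e (v ` {1..r})"] by auto
  then have "(v(Suc r := e)) ` {1..Suc r} \<subseteq> W"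
    unfolding image_fun_upd_Suc using Suc.prems(3) by simp
  moreover have "d = vec.dim W - Suc r"
    using Suc.hyps(2) by simp
  ultimately obtain v' where
    "\<forall>i\<in>{1..Suc r}. v' i = (v(Suc r := e)) i" "orthonormal_basis_of v' W"
    using Suc.hyps(1) Suc.prems(1) v' by blast
  then show ?case
    by (intro exI[of _ v']) auto
qed

lemma orthonormal_basis_exists:
  assumes "vec.subspace W"
  obtains v where "orthonormal_basis_of v W"
  using orthonormal_upto_extend[OF assms, of "\<lambda>_. 0" 0] by (auto simp: orthonormal_upto_def)

lemma orthonormal_basis_of_mem:
  assumes "orthonormal_basis_of v W" and "k \<in> {1..vec.dim W}"
  shows "v k \<in> W"
  using assms vec.span_base[of "v k" "v ` {1..vec.dim W}"] by (auto simp: orthonormal_basis_of_def)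

lemma gram_schmidt_basis:
  assumes W: "vec.subspace W" and w_W: "w ` {1..r} \<subseteq> W"
    and indep: "\<forall>k\<in>{1..r}. w k \<notin> vec.span (w ` {1..<k})"
  obtains v where "orthonormal_basis_of v W" and "r \<le> vec.dim W"
    and "\<And>k. k \<in> {1..r} \<Longrightarrow> w k \<in> vec.span (v ` {1..k})"
    and "\<And>k. k \<in> {1..r} \<Longrightarrow> cinner (w k) (v k) \<noteq> 0"
proof -
  obtain v0 where v0: "orthonormal_upto v0 r"
    and span_v0: "\<forall>k\<le>r. vec.span (v0 ` {1..k}) = vec.span (w ` {1..k})"
    and w_v0: "\<forall>k\<in>{1..r}. cinner (w k) (v0 k) \<noteq> 0"
    using gram_schmidt[OF indep] by blast
  have "vec.span (v0 ` {1..r}) \<subseteq> W"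
    using span_v0 vec.span_minimal[OF w_W W] by simp
  then have v0_W: "v0 ` {1..r} \<subseteq> W"
    using vec.span_superset by blast
  then obtain v where v_v0: "\<forall>k\<in>{1..r}. v k = v0 k" and v: "orthonormal_basis_of v W"
    using orthonormal_upto_extend[OF W v0] by blast
  have "w k \<in> vec.span (v ` {1..k})" if k: "k \<in> {1..r}" for k
  proof -
    have "v ` {1..k} = v0 ` {1..k}"
      using v_v0 k by (intro image_cong) auto
    then show ?thesis
      using span_v0 k vec.span_base[of "w k" "w ` {1..k}"] by auto
  qed
  moreover have "cinner (w k) (v k) \<noteq> 0" if "k \<in> {1..r}" for k
    using w_v0 v_v0 that by simp
  ultimately show ?thesis
    using that v orthonormal_upto_le_dim[OF v0 v0_W] by blast
qed

lemma orthogonal_projection_exists: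
  assumes "vec.subspace S"
  obtains P where "Vector_Spaces.linear (*s) (*s) P" and "\<And>x. P x \<in> S"
    and "\<And>x. x - P x \<in> corth S"
proof -
  obtain e where e: "orthonormal_basis_of e S"
    using orthonormal_basis_exists[OF assms] .
  let ?E = "e ` {1..vec.dim S}"
  let ?P = "orth_proj e (vec.dim S)"
  have e_orthonormal: "orthonormal_upto e (vec.dim S)" and span_E: "vec.span ?E = S"
    using e by (simp_all add: orthonormal_basis_of_def)
  have "?P x \<in> S" for x
    using orth_proj_in_span[of e "vec.dim S" x] span_E by simp
  moreover have "x - ?P x \<in> corth S" for x
  proof -
    have "cinner (x - ?P x) (e l) = 0" if "l \<in> {1..vec.dim S}" for l
      using cinner_orth_proj[OF e_orthonormal that] by (simp add: cinner_diff_left)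
    then have "x - ?P x \<in> corth (vec.span ?E)"
      unfolding corth_span by (auto simp: corth_def)
    then show ?thesis
      using span_E by simp
  qed
  ultimately show ?thesis
    using that linear_orth_proj by blast
qed

lemma linear_image_notin_span:
  assumes T: "Vector_Spaces.linear (*s) (*s) T" and W: "vec.subspace W"
    and T_inj: "\<And>x. x \<in> W \<Longrightarrow> T x = 0 \<Longrightarrow> x = 0"
    and a: "a \<in> W" "a \<notin> vec.span B" and B: "B \<subseteq> W"
  shows "T a \<notin> vec.span (T ` B)"
proof
  assume "T a \<in> vec.span (T ` B)"
  then obtain z where z: "z \<in> vec.span B" "T a = T z"
    using vec.linear_span_image[OF T] by auto
  have "z \<in> W"
    using vec.span_minimal[OF B W] z(1) by auto
  then have "a - z \<in> W"
    using a(1) W by (simp add: vec.subspace_diff)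
  moreover have "T (a - z) = 0"
    using z(2) vec.linear_diff[OF T] by simp
  ultimately have "a - z = 0"
    by (rule T_inj)
  with z(1) a(2) show False
    by simp
qed

lemma linear_image_prefix_notin_span:
  assumes T: "Vector_Spaces.linear (*s) (*s) T" and W: "vec.subspace W"
    and T_inj: "\<And>x. x \<in> W \<Longrightarrow> T x = 0 \<Longrightarrow> x = 0"
    and b: "orthonormal_upto b r" and b_W: "b ` {1..r} \<subseteq> W"
  shows "\<forall>k\<in>{1..r}. T (b k) \<notin> vec.span ((\<lambda>l. T (b l)) ` {1..<k})"
proof
  fix k assume k: "k \<in> {1..r}"
  have "b ` {1..<k} \<subseteq> b ` ({1..r} - {k})"
    using k by auto
  then have "b k \<notin> vec.span (b ` {1..<k})"
    using orthonormal_upto_notin_span[OF b k] vec.span_mono by blast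
  then have "T (b k) \<notin> vec.span (T ` b ` {1..<k})"
    using b_W k by (intro linear_image_notin_span[OF T W T_inj]) auto
  then show "T (b k) \<notin> vec.span ((\<lambda>l. T (b l)) ` {1..<k})"
    by (simp add: image_image)
qed

section \<open>The spaces K_j and U_j\<close>

lemma matpow_Suc_right: "matpow A (Suc k) = matpow A k ** A"
  by (induct k) (simp_all add: matrix_mul_assoc)

lemma mult_mem_kerpow_iff: "A *v x \<in> kerpow A j \<longleftrightarrow> x \<in> kerpow A (Suc j)"
  unfolding kerpow_def by (simp only: mem_Collect_eq matpow_Suc_right matrix_vector_mul_assoc)

lemma kerpow_subspace: "vec.subspace (kerpow A j)"
  unfolding vec.subspace_def kerpow_def
  by (simp add: matrix_vector_right_distrib vector_scalar_commute)

lemma kerpow_mono: "i \<le> j \<Longrightarrow> kerpow A i \<subseteq> kerpow A j"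
  by (rule lift_Suc_mono_le[of "kerpow A"])
    (auto simp: kerpow_def matrix_vector_mul_assoc[symmetric])

lemma Uspace_subspace: "vec.subspace (Uspace A j)"
  unfolding Uspace_def by (intro vec.subspace_inter kerpow_subspace corth_subspace)

lemma Uspace_Suc_kerpow_eq_0:
  assumes "x \<in> Uspace A (Suc j)" and "x \<in> kerpow A j"
  shows "x = 0"
proof -
  have "cinner x x = 0"
    using assms by (simp add: Uspace_def corth_def)
  then show ?thesis
    by (simp add: cinner_self_eq_0)
qed

lemma Uspace_compression:
  assumes P_in: "\<And>y. P y \<in> kerpow A i" and P_orth: "\<And>y. y - P y \<in> corth (kerpow A i)"
    and x: "x \<in> Uspace A (Suc (Suc i))"
  shows "A *v x - P (A *v x) \<in> Uspace A (Suc i)"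
    and "A *v x - P (A *v x) = 0 \<Longrightarrow> x = 0"
proof -
  have "A *v x \<in> kerpow A (Suc i)"
    using x by (simp add: Uspace_def mult_mem_kerpow_iff)
  moreover have "P (A *v x) \<in> kerpow A (Suc i)"
    using P_in kerpow_mono[of i "Suc i" A] by auto
  ultimately have "A *v x - P (A *v x) \<in> kerpow A (Suc i)"
    by (rule vec.subspace_diff[OF kerpow_subspace])
  then show "A *v x - P (A *v x) \<in> Uspace A (Suc i)"
    using P_orth by (simp add: Uspace_def)
  assume "A *v x - P (A *v x) = 0"
  then have "A *v x \<in> kerpow A i"
    using P_in by (metis right_minus_eq)
  then show "x = 0"
    using x Uspace_Suc_kerpow_eq_0 by (simp add: mult_mem_kerpow_iff)
qed

text \<open>The two conditions of the theorem at level j = i + 2, for a basis b of U_j and a basis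
v of U_{j-1}.\<close>

definition flag_adapted ::
  "complex ^'n ^'n \<Rightarrow> nat \<Rightarrow> (nat \<Rightarrow> complex ^'n) \<Rightarrow> (nat \<Rightarrow> complex ^'n) \<Rightarrow> bool" where
  "flag_adapted A i b v \<longleftrightarrow>
     (\<forall>k\<in>{1..vec.dim (Uspace A (Suc (Suc i)))}. k \<le> vec.dim (Uspace A (Suc i))
        \<and> A *v b k \<in> orth_sum (vec.span (v ` {1..k})) (kerpow A i)
        \<and> cinner (A *v b k) (v k) \<noteq> 0)"

lemma orthonormal_basis_Uspace_descend:
  assumes b: "orthonormal_basis_of b (Uspace A (Suc (Suc i)))"
  obtains v where "orthonormal_basis_of v (Uspace A (Suc i))" and "flag_adapted A i b v"
proof -
  let ?U = "Uspace A (Suc (Suc i))" and ?U' = "Uspace A (Suc i)"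
  obtain P where lin_P: "Vector_Spaces.linear (*s) (*s) P"
    and P_in: "\<And>y. P y \<in> kerpow A i" and P_orth: "\<And>y. y - P y \<in> corth (kerpow A i)"
    using orthogonal_projection_exists[OF kerpow_subspace[of A i]] by blast
  define T where "T x = A *v x - P (A *v x)" for x
  have lin_T: "Vector_Spaces.linear (*s) (*s) T"
    using vec.linear_compose_sub[OF matrix_vector_mul_linear_gen[of A]
        Vector_Spaces.linear_compose[OF matrix_vector_mul_linear_gen[of A] lin_P]]
    by (simp add: T_def[abs_def] o_def)
  have T_U: "T x \<in> ?U'" and T_inj: "T x = 0 \<Longrightarrow> x = 0" if "x \<in> ?U" for x
    using Uspace_compression[OF P_in P_orth that] by (simp_all add: T_def)
  have b_U: "b ` {1..vec.dim ?U} \<subseteq> ?U"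
    using orthonormal_basis_of_mem[OF b] by blast
  obtain v where v: "orthonormal_basis_of v ?U'" and dim_le: "vec.dim ?U \<le> vec.dim ?U'"
    and T_span: "\<And>k. k \<in> {1..vec.dim ?U} \<Longrightarrow> T (b k) \<in> vec.span (v ` {1..k})"
    and T_v: "\<And>k. k \<in> {1..vec.dim ?U} \<Longrightarrow> cinner (T (b k)) (v k) \<noteq> 0"
    using gram_schmidt_basis[OF Uspace_subspace, of "\<lambda>k. T (b k)" "vec.dim ?U" A "Suc i"]
      linear_image_prefix_notin_span[OF lin_T Uspace_subspace T_inj]
      b[unfolded orthonormal_basis_of_def] b_U T_U
    by blast
  have "A *v b k \<in> orth_sum (vec.span (v ` {1..k})) (kerpow A i)
    \<and> cinner (A *v b k) (v k) \<noteq> 0" if k: "k \<in> {1..vec.dim ?U}" for k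
  proof -
    have Ab: "A *v b k = T (b k) + P (A *v b k)"
      by (simp add: T_def)
    then have "A *v b k \<in> orth_sum (vec.span (v ` {1..k})) (kerpow A i)"
      unfolding orth_sum_def using T_span[OF k] P_in by blast
    moreover have "v k \<in> corth (kerpow A i)"
      using orthonormal_basis_of_mem[OF v] k dim_le by (auto simp: Uspace_def)
    then have "cinner (P (A *v b k)) (v k) = 0"
      using P_in cinner_eq_0_commute unfolding corth_def by blast
    then have "cinner (A *v b k) (v k) \<noteq> 0"
      using T_v[OF k] by (subst Ab) (simp add: cinner_add_left)
    ultimately show ?thesis
      by blast
  qed
  with dim_le have "flag_adapted A i b v"
    unfolding flag_adapted_def by auto
  with v show ?thesis
    by (rule that)
qed

lemma Uspace_flag_adapted_bases:
  assumes "1 \<le> j0" and "j0 \<le> m"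
  shows "\<exists>u. (\<forall>j\<in>{j0..m}. orthonormal_basis_of (u j) (Uspace A j))
           \<and> (\<forall>i. j0 \<le> Suc i \<and> Suc (Suc i) \<le> m \<longrightarrow> flag_adapted A i (u (Suc (Suc i))) (u (Suc i)))"
  using assms(2)
proof (induction rule: inc_induct)
  case base
  obtain b where "orthonormal_basis_of b (Uspace A m)"
    using orthonormal_basis_exists[OF Uspace_subspace] .
  then show ?case
    by (intro exI[of _ "\<lambda>_. b"]) auto
next
  case (step n)
  then obtain i where n: "n = Suc i"
    using assms(1) by (cases n) auto
  obtain u where bases: "\<forall>j\<in>{Suc n..m}. orthonormal_basis_of (u j) (Uspace A j)"
    and flags: "\<forall>i. Suc n \<le> Suc i \<and> Suc (Suc i) \<le> m \<longrightarrow> flag_adapted A i (u (Suc (Suc i))) (u (Suc i))"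
    using step.IH by blast
  obtain v where v: "orthonormal_basis_of v (Uspace A n)" and flag: "flag_adapted A i (u (Suc n)) v"
    using orthonormal_basis_Uspace_descend[of "u (Suc n)" A i] bases step.hyps n by auto
  show ?case
  proof (rule exI[of _ "u(n := v)"], intro conjI allI impI ballI)
    fix j assume "j \<in> {n..m}"
    then show "orthonormal_basis_of ((u(n := v)) j) (Uspace A j)"
      using bases v by (cases "j = n") auto
  next
    fix i' assume i': "n \<le> Suc i' \<and> Suc (Suc i') \<le> m"
    show "flag_adapted A i' ((u(n := v)) (Suc (Suc i'))) ((u(n := v)) (Suc i'))"
    proof (cases "i' = i")
      case True
      then show ?thesis
        using flag n by simp
    next
      case False
      then have "Suc n \<le> Suc i'"
        using i' n by simp
      then show ?thesis
        using flags i' by simp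
    qed
  qed
qed

theorem proposition4:
  fixes A :: "complex ^'n ^'n" and m :: nat
  assumes "m \<ge> 2"
    and "matpow A m = 0" and "matpow A (m - 1) \<noteq> 0"
  shows "\<exists>u :: nat \<Rightarrow> nat \<Rightarrow> complex ^'n.
           (\<forall>j\<in>{1..m}.
              (\<forall>k\<in>{1..vec.dim (Uspace A j)}. \<forall>l\<in>{1..vec.dim (Uspace A j)}.
                  cinner (u j k) (u j l) = (if k = l then 1 else 0))
            \<and> vec.span (u j ` {1..vec.dim (Uspace A j)}) = Uspace A j)
         \<and> (\<forall>j\<in>{2..m}. \<forall>k\<in>{1..vec.dim (Uspace A j)}.
              k \<le> vec.dim (Uspace A (j - 1))
            \<and> A *v u j k \<in> orth_sum (vec.span (u (j - 1) ` {1..k})) (kerpow A (j - 2))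
            \<and> cinner (A *v u j k) (u (j - 1) k) \<noteq> 0)"
proof -
  obtain u where bases: "\<forall>j\<in>{1..m}. orthonormal_basis_of (u j) (Uspace A j)"
    and flags: "\<forall>i. Suc (Suc i) \<le> m \<longrightarrow> flag_adapted A i (u (Suc (Suc i))) (u (Suc i))"
    using Uspace_flag_adapted_bases[of 1 m A] assms(1) by auto
  have "\<forall>k\<in>{1..vec.dim (Uspace A j)}. k \<le> vec.dim (Uspace A (j - 1))
      \<and> A *v u j k \<in> orth_sum (vec.span (u (j - 1) ` {1..k})) (kerpow A (j - 2))
      \<and> cinner (A *v u j k) (u (j - 1) k) \<noteq> 0" if "j \<in> {2..m}" for j
  proof -
    define i where "i = j - 2"
    have j: "j = Suc (Suc i)"
      using that unfolding i_def by auto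
    then have "flag_adapted A i (u j) (u (j - 1))"
      using flags that by simp
    then show ?thesis
      using j by (simp add: flag_adapted_def)
  qed
  with bases show ?thesis
    unfolding orthonormal_basis_of_def orthonormal_upto_def by (intro exI[of _ u]) blast
qed

end
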